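(* Let $\{x^k\}$ be generated by the Deterministic Asynchronous PALM algorithm and assume (A3). Then for every $k\in\mathbb N$, $$\Phi(z^{k+1})+\frac12\Big(\frac1{\gamma^k_{j_k}}-L_{j_k}(x^k_{-j_k})-2M\sqrt{\rho_\tau\tau}\Big)\|x^{k+1}_{j_k}-x^k_{j_k}\|^2\le\Phi(z^k).$$ In particular $\Psi(x^k)\le\Phi(z^k)$ and $\Phi(z^0)=\Psi(x^0)$.
   Context: Let $\mathcal H=\mathcal H_1\times\cdots\times\mathcal H_m$ be a product of finite-dimensional real Euclidean spaces with $\langle x,y\rangle=\sum_j\langle x_j,y_j\rangle$. For $x\in\mathcal H$, $x_{-j}$ denotes $x$ with its $j$th block removed and $(x_{-j};y)$ the point with $j$th block replaced by $y\in\mathcal H_j$. Let $f:\mathcal H\to\mathbb R$ be $C^1$, $r_j:\mathcal H_j\to(-\infty,\infty]$ proper lower semicontinuous, $r(x)=\sum_jr_j(x_j)$, $\Psi=f+r$ bounded below. $r$ is prox-bounded: there is $\lambda_r>0$ with $\operatorname{argmin}_y\{r(y)+\frac1{2\lambda}\|x-y\|^2\}\ne\emptyset$ for all $x$ and $0<\lambda\le\lambda_r$. For each $j$ there is $L_j:\mathcal H_{-j}\to(0,\infty)$ such that $y\mapsto\nabla_jf(x_{-j};y)$ is $L_j(x_{-j})$-Lipschitz for every $x$. Delays: an integer $\tau\ge1$ and $d_k\in\{0,\dots,\tau\}^m$; $x^{k-d_k}:=(x_1^{k-d_{k,1}},\dots,x_m^{k-d_{k,m}})$, with $x^i_j=x^0_j$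 for $i\le0$. Deterministic Asynchronous PALM: choose $x^0$, $c\in(0,1)$, $M>0$, indices $j_k\in\{1,\dots,m\}$; let $\rho_\tau:=\sup_{j,k}|\{h:k-\tau\le h\le k,\ j_h=j\}|$. For each $k$ set $\gamma^k_j=\min\{c(L_j(x^{k-d_k}_{-j})+2M\sqrt{\rho_\tau\tau})^{-1},\lambda_r\}$, choose $x^{k+1}_{j_k}\in\operatorname{argmin}_{u\in\mathcal H_{j_k}}\{r_{j_k}(u)+\langle\nabla_{j_k}f(x^{k-d_k}),u-x^k_{j_k}\rangle+\frac1{2\gamma^k_{j_k}}\|u-x^k_{j_k}\|^2\}$, and $x^{k+1}_j=x^k_j$ for $j\ne j_k$. (A3): $\|\nabla_{j_k}f(x^k)-\nabla_{j_k}f(x^{k-d_k})\|\le M\|x^k-x^{k-d_k}\|$ for all $k$. Lyapunov function $\Phi:\mathcal H^{1+\tau}\to(-\infty,\infty]$: $\Phi(x(0),\dots,x(\tau))=f(x(0))+r(x(0))+\frac{M\sqrt{\rho_\tau}}{2\sqrt\tau}\sum_{h=1}^\tau(\tau-h+1)\|x(h)-x(h-1)\|^2$, and $z^k:=(x^k,x^{k-1},\dots,x^{k-\tau})$ with $x^i:=x^0$ for $i<0$. *)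

theory Defs
  imports "HOL-Analysis.Analysis"
begin

text \<open>The product space H = H_1 x ... x H_m of finite-dimensional Euclidean
spaces is represented (up to isometry, after choosing orthonormal bases) as real^'n, whose
coordinates are partitioned into blocks by a map blk :: 'n => 'b, where the finite type 'b
indexes the m blocks.\<close>

definition blocksp :: "('n::finite \<Rightarrow> 'b) \<Rightarrow> 'b \<Rightarrow> (real^'n) set" where
  "blocksp blk j = {v. \<forall>c. blk c \<noteq> j \<longrightarrow> v $ c = 0}"

definition blockproj :: "('n::finite \<Rightarrow> 'b) \<Rightarrow> 'b \<Rightarrow> real^'n \<Rightarrow> real^'n" where
  "blockproj blk j x = (\<chi> c. if blk c = j then x $ c else 0)"

text \<open>x_{-j}, x with its j-th block removed (represented by zeroing that block).\<close>
definition blockdrop :: "('n::finite \<Rightarrow> 'b) \<Rightarrow> 'b \<Rightarrow> real^'n \<Rightarrow> real^'n" where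
  "blockdrop blk j x = (\<chi> c. if blk c = j then 0 else x $ c)"

definition blockupd :: "('n::finite \<Rightarrow> 'b) \<Rightarrow> 'b \<Rightarrow> real^'n \<Rightarrow> real^'n \<Rightarrow> real^'n" where
  "blockupd blk j x y = (\<chi> c. if blk c = j then y $ c else x $ c)"

definition pgrad :: "('n::finite \<Rightarrow> 'b) \<Rightarrow> (real^'n \<Rightarrow> real^'n) \<Rightarrow> 'b \<Rightarrow> real^'n \<Rightarrow> real^'n" where
  "pgrad blk g j x = blockproj blk j (g x)"

definition lsc_on :: "'a::topological_space set \<Rightarrow> ('a \<Rightarrow> ereal) \<Rightarrow> bool" where
  "lsc_on S h \<longleftrightarrow> (\<forall>a. closedin (top_of_set S) {u \<in> S. h u \<le> a})"

definition rsum :: "('n::finite \<Rightarrow> 'b::finite) \<Rightarrow> ('b \<Rightarrow> real^'n \<Rightarrow> ereal) \<Rightarrow> real^'n \<Rightarrow> ereal" where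
  "rsum blk r x = (\<Sum>j\<in>UNIV. r j (blockproj blk j x))"

definition Psi :: "('n::finite \<Rightarrow> 'b::finite) \<Rightarrow> (real^'n \<Rightarrow> real) \<Rightarrow> ('b \<Rightarrow> real^'n \<Rightarrow> ereal)
    \<Rightarrow> real^'n \<Rightarrow> ereal" where
  "Psi blk f r x = ereal (f x) + rsum blk r x"

text \<open>x^{k-d_k}: block j taken from x^{k-d_{k,j}}; natural-number subtraction truncates at 0,
which implements the convention x^i = x^0 for i <= 0.\<close>
definition delayed :: "('n::finite \<Rightarrow> 'b) \<Rightarrow> (nat \<Rightarrow> real^'n) \<Rightarrow> (nat \<Rightarrow> 'b \<Rightarrow> nat) \<Rightarrow> nat \<Rightarrow> real^'n" where
  "delayed blk x d k = (\<chi> c. x (k - d k (blk c)) $ c)"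

text \<open>rho_tau = sup_{j,k} |{h : k - tau <= h <= k, j_h = j}| (h ranging over iteration indices >= 0).\<close>
definition rho_tau :: "nat \<Rightarrow> (nat \<Rightarrow> 'b) \<Rightarrow> nat" where
  "rho_tau tau jk = (SUP k. SUP j. card {h \<in> {k - tau..k}. jk h = j})"

definition gam :: "('n::finite \<Rightarrow> 'b) \<Rightarrow> ('b \<Rightarrow> real^'n \<Rightarrow> real) \<Rightarrow> real \<Rightarrow> real \<Rightarrow> nat \<Rightarrow> (nat \<Rightarrow> 'b)
    \<Rightarrow> real \<Rightarrow> (nat \<Rightarrow> real^'n) \<Rightarrow> (nat \<Rightarrow> 'b \<Rightarrow> nat) \<Rightarrow> nat \<Rightarrow> 'b \<Rightarrow> real" where
  "gam blk L c M tau jk lam_r x d k j =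
     min (c * inverse (L j (blockdrop blk j (delayed blk x d k)) + 2 * M * sqrt (real (rho_tau tau jk) * real tau))) lam_r"

text \<open>Lyapunov function Phi(x(0),...,x(tau)); the tuple is given as a function h \<mapsto> x(h), h = 0..tau.\<close>
definition Phi :: "('n::finite \<Rightarrow> 'b::finite) \<Rightarrow> (real^'n \<Rightarrow> real) \<Rightarrow> ('b \<Rightarrow> real^'n \<Rightarrow> ereal)
    \<Rightarrow> real \<Rightarrow> nat \<Rightarrow> (nat \<Rightarrow> 'b) \<Rightarrow> (nat \<Rightarrow> real^'n) \<Rightarrow> ereal" where
  "Phi blk f r M tau jk z =
     ereal (f (z 0)) + rsum blk r (z 0)
     + ereal (M * sqrt (real (rho_tau tau jk)) / (2 * sqrt (real tau))
         * (\<Sum>h = 1..tau. real (tau - h + 1) * (norm (z h - z (h - 1)))\<^sup>2))"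

text \<open>z^k = (x^k, x^{k-1}, ..., x^{k-tau}) with x^i = x^0 for i < 0.\<close>
definition zseq :: "(nat \<Rightarrow> real^'n) \<Rightarrow> nat \<Rightarrow> nat \<Rightarrow> real^'n" where
  "zseq x k = (\<lambda>h. x (k - h))"

end

theory Submission
  imports Defs
begin

text \<open>The block descent lemma bounds f(x^{k+1}) by f(x^k) plus its linearisation at x^k, while
optimality of the prox step, compared with keeping the old block, pays for the linearisation at the
delayed point x^{k-d_k}. By (A3) the two gradients differ by at most M |x^k - x^{k-d_k}|, and each
coordinate of x^k - x^{k-d_k} is a sum of at most rho_tau of the last tau steps, so
|x^k - x^{k-d_k}|^2 is at most rho_tau times the sum of the last tau squared steps. Splitting the
cross term by AM-GM, the part carried by past steps is exactly what the weighted sum in Phi loses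
when the window moves from z^k to z^{k+1}. No property of the step size gamma is needed.\<close>

lemma blockproj_in_blocksp: "blockproj blk j x \<in> blocksp blk j"
  by (simp add: blockproj_def blocksp_def)

lemma inner_blocksp_blockproj: "v \<in> blocksp blk j \<Longrightarrow> u \<bullet> v = blockproj blk j u \<bullet> v"
  unfolding inner_vec_def blocksp_def blockproj_def by (intro sum.cong) auto

lemma blockupd_add_blocksp:
  "D \<in> blocksp blk j \<Longrightarrow> x + D = blockupd blk j x (blockproj blk j x + D)"
  unfolding blockupd_def blockproj_def blocksp_def by (auto simp: vec_eq_iff)

lemma blockupd_blockproj_self: "blockupd blk j x (blockproj blk j x) = x"
  unfolding blockupd_def blockproj_def by (auto simp: vec_eq_iff)

lemma blocksp_add: "u \<in> blocksp blk j \<Longrightarrow> v \<in> blocksp blk j \<Longrightarrow> u + v \<in> blocksp blk j"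
  by (simp add: blocksp_def)

lemma blocksp_scaleR: "v \<in> blocksp blk j \<Longrightarrow> t *\<^sub>R v \<in> blocksp blk j"
  by (simp add: blocksp_def)

section \<open>The block descent lemma\<close>

lemma block_gradient_increment_le:
  assumes lip: "\<And>u v. u \<in> blocksp blk j \<Longrightarrow> v \<in> blocksp blk j \<Longrightarrow>
         norm (pgrad blk g j (blockupd blk j x u) - pgrad blk g j (blockupd blk j x v))
           \<le> LL * norm (u - v)"
    and D: "D \<in> blocksp blk j" and t: "0 \<le> t"
  shows "g (x + t *\<^sub>R D) \<bullet> D - g x \<bullet> D \<le> LL * t * (norm D)\<^sup>2"
proof -
  have tD: "t *\<^sub>R D \<in> blocksp blk j" using D by (rule blocksp_scaleR)
  have "g (x + t *\<^sub>R D) \<bullet> D - g x \<bullet> D = (pgrad blk g j (x + t *\<^sub>R D) - pgrad blk g j x) \<bullet> D"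
    using inner_blocksp_blockproj[OF D] by (simp add: pgrad_def inner_diff_left)
  also have "\<dots> \<le> norm (pgrad blk g j (x + t *\<^sub>R D) - pgrad blk g j x) * norm D"
    by (rule norm_cauchy_schwarz)
  also have "\<dots> \<le> LL * norm (t *\<^sub>R D) * norm D"
  proof (rule mult_right_mono[OF _ norm_ge_zero])
    have "norm (pgrad blk g j (blockupd blk j x (blockproj blk j x + t *\<^sub>R D))
            - pgrad blk g j (blockupd blk j x (blockproj blk j x)))
          \<le> LL * norm (blockproj blk j x + t *\<^sub>R D - blockproj blk j x)"
      by (rule lip[OF blocksp_add[OF blockproj_in_blocksp tD] blockproj_in_blocksp])
    then show "norm (pgrad blk g j (x + t *\<^sub>R D) - pgrad blk g j x) \<le> LL * norm (t *\<^sub>R D)"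
      by (simp add: blockupd_add_blocksp[OF tD, symmetric] blockupd_blockproj_self)
  qed
  also have "\<dots> = LL * t * (norm D)\<^sup>2" using t by (simp add: power2_eq_square)
  finally show ?thesis .
qed

lemma block_descent_lemma:
  fixes f :: "real^'n \<Rightarrow> real"
  assumes grad: "\<forall>y. (f has_derivative (\<lambda>h. g y \<bullet> h)) (at y)"
    and lip: "\<And>u v. u \<in> blocksp blk j \<Longrightarrow> v \<in> blocksp blk j \<Longrightarrow>
         norm (pgrad blk g j (blockupd blk j x u) - pgrad blk g j (blockupd blk j x v))
           \<le> LL * norm (u - v)"
    and D: "D \<in> blocksp blk j"
  shows "f (x + D) \<le> f x + g x \<bullet> D + LL / 2 * (norm D)\<^sup>2"
proof -
  define \<phi> where "\<phi> t = f (x + t *\<^sub>R D) - t * (g x \<bullet> D) - LL / 2 * t\<^sup>2 * (norm D)\<^sup>2" for t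
  have "\<phi> 1 \<le> \<phi> 0"
  proof (rule DERIV_nonpos_imp_nonincreasing[of 0 1 \<phi>])
    fix t :: real assume t: "0 \<le> t" "t \<le> 1"
    have "((\<lambda>t. f (x + t *\<^sub>R D)) has_derivative (\<lambda>h. g (x + t *\<^sub>R D) \<bullet> (h *\<^sub>R D))) (at t)"
      by (rule has_derivative_compose[where g=f, OF _ grad[rule_format]])
         (auto intro!: derivative_eq_intros)
    then have "((\<lambda>t. f (x + t *\<^sub>R D)) has_real_derivative g (x + t *\<^sub>R D) \<bullet> D) (at t)"
      unfolding has_field_derivative_def
      by (rule has_derivative_eq_rhs) (auto simp: fun_eq_iff)
    then have "(\<phi> has_real_derivative g (x + t *\<^sub>R D) \<bullet> D - g x \<bullet> D - LL * t * (norm D)\<^sup>2) (at t)"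
      unfolding \<phi>_def
      by (auto intro!: derivative_eq_intros simp: power2_eq_square algebra_simps)
    moreover have "g (x + t *\<^sub>R D) \<bullet> D - g x \<bullet> D - LL * t * (norm D)\<^sup>2 \<le> 0"
      using block_gradient_increment_le[OF lip D t(1)] by simp
    ultimately show "\<exists>y. (\<phi> has_real_derivative y) (at t) \<and> y \<le> 0" by blast
  qed simp
  then show ?thesis unfolding \<phi>_def by simp
qed

section \<open>Delayed iterates\<close>

definition past_sq_step :: "(nat \<Rightarrow> real^'n) \<Rightarrow> nat \<Rightarrow> nat \<Rightarrow> real" where
  "past_sq_step x k h = (norm (x (k - (h - 1)) - x (k - h)))\<^sup>2"

lemma diff_eq_sum_past_steps:
  fixes x :: "nat \<Rightarrow> 'a::ab_group_add"
  shows "x k - x (k - n) = (\<Sum>h=1..n. x (k - (h - 1)) - x (k - h))"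
proof (induction n)
  case (Suc n)
  have "(\<Sum>h=1..Suc n. x (k - (h - 1)) - x (k - h))
      = (\<Sum>h=1..n. x (k - (h - 1)) - x (k - h)) + (x (k - n) - x (k - Suc n))"
    by (simp add: sum.atLeast1_atMost_eq)
  also have "\<dots> = x k - x (k - Suc n)" by (simp only: Suc.IH[symmetric]) simp
  finally show ?case by simp
qed simp

lemma delayed_component_sq_le:
  fixes x :: "nat \<Rightarrow> real^'n" and blk :: "'n \<Rightarrow> 'b"
  assumes step_other: "\<forall>k i. blk i \<noteq> jk k \<longrightarrow> x (Suc k) $ i = x k $ i"
    and delay: "d k (blk c) \<le> tau"
    and card: "real (card {h \<in> {k - tau..k}. jk h = blk c}) \<le> rho"
  shows "((x k - delayed blk x d k) $ c)\<^sup>2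
         \<le> rho * (\<Sum>h=1..tau. ((x (k - (h - 1)) - x (k - h)) $ c)\<^sup>2)"
proof -
  define w where "w h = (x (k - (h - 1)) - x (k - h)) $ c" for h
  define A where "A = {h \<in> {1..d k (blk c)}. h \<le> k \<and> jk (k - h) = blk c}"
  have rho: "0 \<le> rho" using card by (meson order_trans of_nat_0_le_iff)
  have "(x k - delayed blk x d k) $ c = (\<Sum>h=1..d k (blk c). w h)"
    using arg_cong[OF diff_eq_sum_past_steps[of x k "d k (blk c)"], of "\<lambda>v. v $ c"]
    by (simp add: delayed_def w_def sum_component)
  \<comment> \<open>only lags whose step updated block blk c contribute, and there are at most rho of them\<close>
  also have "\<dots> = (\<Sum>h\<in>A. w h)"
  proof (rule sum.mono_neutral_right)
    show "\<forall>h\<in>{1..d k (blk c)} - A. w h = 0"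
    proof
      fix h assume h: "h \<in> {1..d k (blk c)} - A"
      show "w h = 0"
      proof (cases "h \<le> k")
        case True
        then have "k - (h - 1) = Suc (k - h)" "jk (k - h) \<noteq> blk c" using h by (auto simp: A_def)
        then show ?thesis using step_other by (simp add: w_def)
      qed (simp add: w_def)
    qed
  qed (auto simp: A_def)
  finally have sum_A: "(x k - delayed blk x d k) $ c = (\<Sum>h\<in>A. w h)" .
  have "card A \<le> card {h \<in> {k - tau..k}. jk h = blk c}"
  proof (rule card_inj_on_le[of "\<lambda>h. k - h"])
    show "inj_on (\<lambda>h. k - h) A" by (auto simp: A_def inj_on_def)
    show "(\<lambda>h. k - h) ` A \<subseteq> {h \<in> {k - tau..k}. jk h = blk c}"
      using delay by (auto simp: A_def)
  qed simp
  with card have card_A: "real (card A) \<le> rho" by linarith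
  have "((x k - delayed blk x d k) $ c)\<^sup>2 \<le> (\<Sum>h\<in>A. (w h)\<^sup>2) * card A"
    unfolding sum_A by (rule sum_squared_le_sum_of_squares)
  also have "\<dots> \<le> (\<Sum>h\<in>A. (w h)\<^sup>2) * rho"
    by (rule mult_left_mono[OF card_A]) (simp add: sum_nonneg)
  also have "\<dots> \<le> (\<Sum>h=1..tau. (w h)\<^sup>2) * rho"
    using delay by (intro mult_right_mono[OF sum_mono2 rho]) (auto simp: A_def)
  finally show ?thesis by (simp add: w_def mult.commute)
qed

lemma norm_sq_vec_eq_sum: "(norm (v::real^'n))\<^sup>2 = (\<Sum>c\<in>UNIV. (v $ c)\<^sup>2)"
  unfolding power2_norm_eq_inner inner_vec_def by (simp add: power2_eq_square)

lemma norm_delayed_diff_sq_le: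
  fixes x :: "nat \<Rightarrow> real^'n" and blk :: "'n \<Rightarrow> 'b"
  assumes step_other: "\<forall>k i. blk i \<noteq> jk k \<longrightarrow> x (Suc k) $ i = x k $ i"
    and delays: "\<forall>j. d k j \<le> tau"
    and card: "\<forall>j. real (card {h \<in> {k - tau..k}. jk h = j}) \<le> rho"
  shows "(norm (x k - delayed blk x d k))\<^sup>2 \<le> rho * (\<Sum>h=1..tau. past_sq_step x k h)"
proof -
  have "(norm (x k - delayed blk x d k))\<^sup>2 = (\<Sum>c\<in>UNIV. ((x k - delayed blk x d k) $ c)\<^sup>2)"
    by (rule norm_sq_vec_eq_sum)
  also have "\<dots> \<le> (\<Sum>c\<in>UNIV. rho * (\<Sum>h=1..tau. ((x (k - (h - 1)) - x (k - h)) $ c)\<^sup>2))"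
    using delays card by (intro sum_mono delayed_component_sq_le[OF step_other]) auto
  also have "\<dots> = rho * (\<Sum>h=1..tau. past_sq_step x k h)"
    by (simp add: past_sq_step_def norm_sq_vec_eq_sum sum_distrib_left sum.swap[of _ UNIV])
  finally show ?thesis .
qed

lemma card_le_rho_tau: "card {h \<in> {k - tau..k}. jk h = j} \<le> rho_tau tau jk"
proof -
  have window: "card {h \<in> {k - tau..k}. jk h = j} \<le> tau + 1" for k j
  proof -
    have "card {h \<in> {k - tau..k}. jk h = j} \<le> card {k - tau..k}" by (rule card_mono) auto
    also have "\<dots> \<le> tau + 1" by simp
    finally show ?thesis .
  qed
  have bdd_j: "bdd_above (range (\<lambda>j. card {h \<in> {k - tau..k}. jk h = j}))" for k
    by (rule bdd_aboveI2) (rule window)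
  have bdd_k: "bdd_above (range (\<lambda>k. SUP j. card {h \<in> {k - tau..k}. jk h = j}))"
    by (rule bdd_aboveI2) (rule cSUP_least, simp, rule window)
  have "card {h \<in> {k - tau..k}. jk h = j} \<le> (SUP j. card {h \<in> {k - tau..k}. jk h = j})"
    by (rule cSUP_upper[OF _ bdd_j]) simp
  also have "\<dots> \<le> rho_tau tau jk"
    unfolding rho_tau_def by (rule cSUP_upper[OF _ bdd_k]) simp
  finally show ?thesis .
qed

lemma rho_tau_ge_1: "1 \<le> rho_tau tau jk"
proof -
  have "{h \<in> {0 - tau..0}. jk h = jk 0} = {0}" by auto
  then show ?thesis using card_le_rho_tau[of 0 tau jk "jk 0"] by simp
qed

section \<open>The Lyapunov function along the iterates\<close>

lemma sum_weighted_shift: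
  fixes a :: "nat \<Rightarrow> real"
  shows "(\<Sum>h=1..t. real (t - h + 1) * a h)
    = real t * a 1 + (\<Sum>h=1..t. real (t - h + 1) * a (Suc h)) - (\<Sum>h=1..t. a (Suc h))"
proof (induction t)
  case (Suc t)
  have weights: "(\<Sum>h=1..Suc t. real (Suc t - h + 1) * b h)
      = (\<Sum>h=1..t. real (t - h + 1) * b h) + (\<Sum>h=1..t. b h) + b (Suc t)" for b :: "nat \<Rightarrow> real"
  proof -
    have "(\<Sum>h=1..t. real (Suc t - h + 1) * b h) = (\<Sum>h=1..t. real (t - h + 1) * b h + b h)"
      by (rule sum.cong) (auto simp: Suc_diff_le algebra_simps)
    then show ?thesis by (simp add: sum.distrib)
  qed
  have "(\<Sum>h=1..t. a h) + a (Suc t) = a 1 + (\<Sum>h=1..t. a (Suc h))"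
    by (induction t) (simp_all add: sum.atLeast1_atMost_eq algebra_simps)
  with Suc show ?case by (simp only: weights) (simp add: algebra_simps)
qed simp

lemma weighted_past_steps_shift:
  "(\<Sum>h=1..tau. real (tau - h + 1) * past_sq_step x (Suc k) h)
   = (\<Sum>h=1..tau. real (tau - h + 1) * past_sq_step x k h)
     + real tau * (norm (x (Suc k) - x k))\<^sup>2 - (\<Sum>h=1..tau. past_sq_step x k h)"
proof -
  define a where "a h = past_sq_step x (Suc k) h" for h
  have first: "a 1 = (norm (x (Suc k) - x k))\<^sup>2" by (simp add: a_def past_sq_step_def)
  have shifted: "a (Suc h) = past_sq_step x k h" if "h \<in> {1..tau}" for h
    using that by (simp add: a_def past_sq_step_def Suc_diff_le)
  have sums: "(\<Sum>h=1..tau. real (tau - h + 1) * a (Suc h))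
      = (\<Sum>h=1..tau. real (tau - h + 1) * past_sq_step x k h)"
    "(\<Sum>h=1..tau. a (Suc h)) = (\<Sum>h=1..tau. past_sq_step x k h)"
    using shifted by (auto intro: sum.cong)
  show ?thesis using sum_weighted_shift[of tau a] unfolding first sums by (simp add: a_def)
qed

lemma Phi_zseq:
  "Phi blk f r M tau jk (zseq x k) = Psi blk f r (x k)
     + ereal (M * sqrt (real (rho_tau tau jk)) / (2 * sqrt (real tau))
              * (\<Sum>h=1..tau. real (tau - h + 1) * past_sq_step x k h))"
  by (simp add: Phi_def Psi_def zseq_def past_sq_step_def norm_minus_commute)

lemma Psi_le_Phi_zseq:
  assumes "0 \<le> M"
  shows "Psi blk f r (x k) \<le> Phi blk f r M tau jk (zseq x k)"
proof -
  have "0 \<le> M * sqrt (real (rho_tau tau jk)) / (2 * sqrt (real tau))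
              * (\<Sum>h=1..tau. real (tau - h + 1) * past_sq_step x k h)"
    using assms by (intro mult_nonneg_nonneg sum_nonneg) (auto simp: past_sq_step_def)
  then show ?thesis unfolding Phi_zseq by (simp add: add_increasing2)
qed

lemma Phi_zseq_0: "Phi blk f r M tau jk (zseq x 0) = Psi blk f r (x 0)"
  by (simp add: Phi_zseq past_sq_step_def)

section \<open>One step of the algorithm\<close>

lemma one_step_real_inequality:
  fixes M rho tau :: real
  assumes descent: "f1 \<le> f0 + p0D + LL / 2 * n\<^sup>2"
    and argmin: "R1 + (pD + 1 / (2 * gm) * n\<^sup>2) \<le> R0"
    and cross: "p0D - pD \<le> M * a * n"
    and delay: "a\<^sup>2 \<le> rho * E"
    and shift: "S' = S + tau * n\<^sup>2 - E"
    and rho: "1 \<le> rho" and tau: "1 \<le> tau" and M: "0 < M"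
  shows "f1 + R1 + M * sqrt rho / (2 * sqrt tau) * S'
           + 1 / 2 * (1 / gm - LL - 2 * M * sqrt (rho * tau)) * n\<^sup>2
         \<le> f0 + R0 + M * sqrt rho / (2 * sqrt tau) * S"
proof -
  define q where "q = sqrt (rho * tau)"
  define w where "w = sqrt rho / (2 * sqrt tau)"
  have q: "0 < q" "q = sqrt rho * sqrt tau" using rho tau by (auto simp: q_def real_sqrt_mult)
  have sqrts: "0 < sqrt rho" "0 < sqrt tau" "sqrt rho * sqrt rho = rho" "sqrt tau * sqrt tau = tau"
    using rho tau by auto
  \<comment> \<open>AM-GM, weighted so that the past steps enter with exactly the weight M w lost by the shift\<close>
  have "2 * q * (a * n) \<le> a\<^sup>2 + q\<^sup>2 * n\<^sup>2"
    using zero_le_power2[of "a - q * n"] by (simp add: power2_eq_square algebra_simps)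
  then have "a * n \<le> (a\<^sup>2 + q\<^sup>2 * n\<^sup>2) / (2 * q)"
    using q(1) by (simp add: pos_le_divide_eq mult.commute)
  also have "\<dots> = a\<^sup>2 / (2 * q) + q / 2 * n\<^sup>2"
    using q(1) by (simp add: add_divide_distrib power2_eq_square)
  also have "a\<^sup>2 / (2 * q) \<le> w * E"
  proof -
    have "a\<^sup>2 / (2 * q) \<le> rho * E / (2 * q)" using delay q by (simp add: divide_right_mono)
    also have "\<dots> = w * E" unfolding w_def q(2) using sqrts by (simp add: field_simps)
    finally show ?thesis .
  qed
  finally have "M * (a * n) \<le> M * (w * E + q / 2 * n\<^sup>2)" using M by simp
  with cross have cross': "p0D - pD \<le> M * w * E + M * q / 2 * n\<^sup>2"
    by (simp add: algebra_simps)
  have "w * tau = q / 2" unfolding w_def q(2) using sqrts by (simp add: field_simps)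
  then have "M * w * S' = M * w * S + M * q / 2 * n\<^sup>2 - M * w * E"
    unfolding shift by (simp add: algebra_simps)
  then show ?thesis
    using descent argmin cross' by (simp add: w_def q_def[symmetric] field_simps)
qed

lemma sum_ereal_neq_MInfty: "(\<And>i. i \<in> A \<Longrightarrow> f i \<noteq> -\<infinity>) \<Longrightarrow> sum f A \<noteq> (-\<infinity>::ereal)"
  by (induction A rule: infinite_finite_induct) auto

lemma ereal_le_add_common:
  fixes R0 R1 Q :: ereal
  assumes "R1 + ereal u \<le> R0" "R1 \<noteq> -\<infinity>" "Q \<noteq> -\<infinity>"
    and "\<And>r1 r0. r1 + u \<le> r0 \<Longrightarrow> a1 + r1 + w1 + v1 \<le> a0 + r0 + w0"
  shows "ereal a1 + (R1 + Q) + ereal w1 + ereal v1 \<le> ereal a0 + (R0 + Q) + ereal w0"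
  using assms by (cases R0; cases Q; cases R1) auto

lemma rsum_remove_block:
  "rsum blk r x = r j (blockproj blk j x) + (\<Sum>i\<in>UNIV - {j}. r i (blockproj blk i x))"
  unfolding rsum_def by (rule sum.remove) auto

lemma rsum_block_update:
  assumes "\<forall>i. blk i \<noteq> j \<longrightarrow> x1 $ i = x0 $ i"
  shows "rsum blk r x1 = r j (blockproj blk j x1) + (\<Sum>i\<in>UNIV - {j}. r i (blockproj blk i x0))"
proof -
  have "blockproj blk i x1 = blockproj blk i x0" if "i \<noteq> j" for i
    using assms that by (auto simp: vec_eq_iff blockproj_def)
  then show ?thesis by (simp add: rsum_remove_block[of blk r x1 j])
qed

lemma Phi_zseq_descent:
  fixes blk :: "'n::finite \<Rightarrow> 'b::finite" and x :: "nat \<Rightarrow> real^'n"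
  assumes grad: "\<forall>y. (f has_derivative (\<lambda>h. g y \<bullet> h)) (at y)"
    and r_proper: "\<forall>j. \<forall>u\<in>blocksp blk j. r j u \<noteq> -\<infinity>"
    and L_lip: "\<forall>j y u v. u \<in> blocksp blk j \<longrightarrow> v \<in> blocksp blk j \<longrightarrow>
         norm (pgrad blk g j (blockupd blk j y u) - pgrad blk g j (blockupd blk j y v))
           \<le> L j (blockdrop blk j y) * norm (u - v)"
    and tau: "1 \<le> tau" and delays: "\<forall>j. d k j \<le> tau" and M: "0 < M"
    and step_other: "\<forall>k i. blk i \<noteq> jk k \<longrightarrow> x (Suc k) $ i = x k $ i"
    and prox: "\<forall>u\<in>blocksp blk (jk k).
         r (jk k) (blockproj blk (jk k) (x (Suc k)))
           + ereal (pgrad blk g (jk k) (delayed blk x d k)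
                      \<bullet> (blockproj blk (jk k) (x (Suc k)) - blockproj blk (jk k) (x k))
                    + 1 / (2 * gm) * (norm (blockproj blk (jk k) (x (Suc k)) - blockproj blk (jk k) (x k)))\<^sup>2)
         \<le> r (jk k) u
           + ereal (pgrad blk g (jk k) (delayed blk x d k) \<bullet> (u - blockproj blk (jk k) (x k))
                    + 1 / (2 * gm) * (norm (u - blockproj blk (jk k) (x k)))\<^sup>2)"
    and A3: "norm (pgrad blk g (jk k) (x k) - pgrad blk g (jk k) (delayed blk x d k))
               \<le> M * norm (x k - delayed blk x d k)"
  shows "Phi blk f r M tau jk (zseq x (Suc k))
           + ereal (1 / 2 * (1 / gm - L (jk k) (blockdrop blk (jk k) (x k))
                             - 2 * M * sqrt (real (rho_tau tau jk) * real tau))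
                    * (norm (blockproj blk (jk k) (x (Suc k)) - blockproj blk (jk k) (x k)))\<^sup>2)
         \<le> Phi blk f r M tau jk (zseq x k)"
proof -
  define j where "j = jk k"
  define x0 where "x0 = x k"
  define x1 where "x1 = x (Suc k)"
  define D where "D = x1 - x0"
  define p where "p = pgrad blk g j (delayed blk x d k)"
  define p0 where "p0 = pgrad blk g j x0"
  define LL where "LL = L j (blockdrop blk j x0)"
  define R0 where "R0 = r j (blockproj blk j x0)"
  define R1 where "R1 = r j (blockproj blk j x1)"
  define Q where "Q = (\<Sum>i\<in>UNIV - {j}. r i (blockproj blk i x0))"
  define E where "E = (\<Sum>h=1..tau. past_sq_step x k h)"
  have same: "\<forall>i. blk i \<noteq> j \<longrightarrow> x1 $ i = x0 $ i"
    using step_other by (simp add: j_def x0_def x1_def)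
  then have D: "D \<in> blocksp blk j" by (auto simp: blocksp_def D_def)
  have proj_D: "blockproj blk j x1 - blockproj blk j x0 = D"
    using same by (auto simp: vec_eq_iff blockproj_def D_def)
  have descent: "f x1 \<le> f x0 + p0 \<bullet> D + LL / 2 * (norm D)\<^sup>2"
    using block_descent_lemma[OF grad _ D, of x0 LL] L_lip inner_blocksp_blockproj[OF D, of "g x0"]
    by (simp add: D_def LL_def p0_def pgrad_def)
  have argmin: "R1 + ereal (p \<bullet> D + 1 / (2 * gm) * (norm D)\<^sup>2) \<le> R0"
    using bspec[OF prox blockproj_in_blocksp[of blk "jk k" "x k"]]
    by (simp add: R0_def R1_def p_def proj_D[symmetric] j_def x0_def x1_def)
  have "p0 \<bullet> D - p \<bullet> D \<le> norm (p0 - p) * norm D"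
    unfolding inner_diff_left[symmetric] by (rule norm_cauchy_schwarz)
  also have "\<dots> \<le> M * norm (x0 - delayed blk x d k) * norm D"
    using A3 by (intro mult_right_mono) (simp_all add: p0_def p_def j_def x0_def)
  finally have cross: "p0 \<bullet> D - p \<bullet> D \<le> M * norm (x0 - delayed blk x d k) * norm D" .
  have delay: "(norm (x0 - delayed blk x d k))\<^sup>2 \<le> real (rho_tau tau jk) * E"
    unfolding x0_def E_def
    by (rule norm_delayed_diff_sq_le[where d=d and k=k, OF step_other delays])
       (simp only: of_nat_le_iff card_le_rho_tau simp_thms)
  have rsum: "rsum blk r x0 = R0 + Q" "rsum blk r x1 = R1 + Q"
    using rsum_block_update[OF same] by (simp_all add: rsum_remove_block R0_def R1_def Q_def)
  have r_finite: "r i (blockproj blk i y) \<noteq> -\<infinity>" for i y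
    by (rule r_proper[rule_format, OF blockproj_in_blocksp])
  have finite: "R1 \<noteq> -\<infinity>" "Q \<noteq> -\<infinity>"
    unfolding R1_def Q_def by (simp_all add: r_finite sum_ereal_neq_MInfty)
  show ?thesis
    unfolding Phi_zseq Psi_def weighted_past_steps_shift
      j_def[symmetric] x0_def[symmetric] x1_def[symmetric] LL_def[symmetric] proj_D rsum
    using descent cross delay rho_tau_ge_1[of tau jk] tau
    by (intro ereal_le_add_common[OF argmin finite] one_step_real_inequality[where E=E and n="norm D"])
       (simp_all add: M D_def E_def)
qed

theorem mainTheorem4:
  fixes blk :: "'n::finite \<Rightarrow> 'b::finite"
    and f :: "real^'n \<Rightarrow> real" and g :: "real^'n \<Rightarrow> real^'n"
    and r :: "'b \<Rightarrow> real^'n \<Rightarrow> ereal"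
    and L :: "'b \<Rightarrow> real^'n \<Rightarrow> real"
    and lam_r c M :: real and tau :: nat
    and d :: "nat \<Rightarrow> 'b \<Rightarrow> nat" and jk :: "nat \<Rightarrow> 'b"
    and x :: "nat \<Rightarrow> real^'n"
  assumes grad: "\<forall>y. (f has_derivative (\<lambda>h. g y \<bullet> h)) (at y)"
    and C1: "continuous_on UNIV g"
    and r_proper: "\<forall>j. \<forall>u\<in>blocksp blk j. r j u \<noteq> -\<infinity>"
                  "\<forall>j. \<exists>u\<in>blocksp blk j. r j u \<noteq> \<infinity>"
    and r_lsc: "\<forall>j. lsc_on (blocksp blk j) (r j)"
    and Psi_bdd: "\<exists>B::real. \<forall>y. ereal B \<le> Psi blk f r y"
    and lam_r_pos: "lam_r > 0"
    and prox_bdd: "\<forall>y lam. 0 < lam \<and> lam \<le> lam_r \<longrightarrow>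
         (\<exists>v. \<forall>w. rsum blk r v + ereal (1 / (2 * lam) * (norm (y - v))\<^sup>2)
                   \<le> rsum blk r w + ereal (1 / (2 * lam) * (norm (y - w))\<^sup>2))"
    and L_pos: "\<forall>j y. 0 < L j (blockdrop blk j y)"
    and L_lip: "\<forall>j y u v. u \<in> blocksp blk j \<longrightarrow> v \<in> blocksp blk j \<longrightarrow>
         norm (pgrad blk g j (blockupd blk j y u) - pgrad blk g j (blockupd blk j y v))
           \<le> L j (blockdrop blk j y) * norm (u - v)"
    and tau_ge: "tau \<ge> 1"
    and delays: "\<forall>k j. d k j \<le> tau"
    and c_bds: "0 < c" "c < 1"
    and M_pos: "M > 0"
    and step_other: "\<forall>k i. blk i \<noteq> jk k \<longrightarrow> x (Suc k) $ i = x k $ i"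
    and step_argmin: "\<forall>k. \<forall>u\<in>blocksp blk (jk k).
         r (jk k) (blockproj blk (jk k) (x (Suc k)))
           + ereal (pgrad blk g (jk k) (delayed blk x d k)
                      \<bullet> (blockproj blk (jk k) (x (Suc k)) - blockproj blk (jk k) (x k))
                    + 1 / (2 * gam blk L c M tau jk lam_r x d k (jk k))
                      * (norm (blockproj blk (jk k) (x (Suc k)) - blockproj blk (jk k) (x k)))\<^sup>2)
         \<le> r (jk k) u
           + ereal (pgrad blk g (jk k) (delayed blk x d k) \<bullet> (u - blockproj blk (jk k) (x k))
                    + 1 / (2 * gam blk L c M tau jk lam_r x d k (jk k))
                      * (norm (u - blockproj blk (jk k) (x k)))\<^sup>2)"
    and A3: "\<forall>k. norm (pgrad blk g (jk k) (x k) - pgrad blk g (jk k) (delayed blk x d k))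
                  \<le> M * norm (x k - delayed blk x d k)"
  shows "(\<forall>k. Phi blk f r M tau jk (zseq x (Suc k))
              + ereal (1 / 2 * (1 / gam blk L c M tau jk lam_r x d k (jk k)
                                - L (jk k) (blockdrop blk (jk k) (x k))
                                - 2 * M * sqrt (real (rho_tau tau jk) * real tau))
                       * (norm (blockproj blk (jk k) (x (Suc k)) - blockproj blk (jk k) (x k)))\<^sup>2)
            \<le> Phi blk f r M tau jk (zseq x k))
       \<and> (\<forall>k. Psi blk f r (x k) \<le> Phi blk f r M tau jk (zseq x k))
       \<and> Phi blk f r M tau jk (zseq x 0) = Psi blk f r (x 0)"
proof (intro conjI allI Psi_le_Phi_zseq Phi_zseq_0
    Phi_zseq_descent[where d=d, OF grad r_proper(1) L_lip tau_ge _ M_pos step_other])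
qed (use delays step_argmin A3 M_pos in auto)

end
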